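(* Let $A$ be a finite set. The map $\mathrm{Ch}(Y^A)\ni\mathbf c\mapsto\overset{*}{<}_{\mathbf c}\in(R(A),\sqsupseteq)$ and the map $(R(A),\sqsupseteq)\ni\overset{*}{<}\mapsto\mathbf c^{\overset{*}{<}}\in\mathrm{Ch}(Y^A)$ are mutually inverse $\Sigma_A$-equivariant isomorphisms of posets, where $\mathrm{Ch}(Y^A)$ is ordered by $\mathbf c\le\mathbf e$ iff there is a morphism from $\mathbf c$ to $\mathbf e$ in the cube chain category.
   Context: $Y^A$ is the bi-pointed precubical set where $Y^A[k]$ is the set of pairs $(c,<)$ with $c:A\to\{0,*,1\}$, $|c^{-1}( * )|=k$, and $<$ a strict total order on $c^{-1}( * )$; if $c^{-1}( * )=\{a_1<\dots<a_k\}$ then the face $d^\varepsilon_i(c,<)=(c',<')$ where $c'(a_i)=\varepsilon$, $c'=c$ elsewhere, $<'$ the restriction of $<$; initial vertex $(\text{const}_0,\emptyset)$, final vertex $(\text{const}_1,\emptyset)$. For a cube $x$, $d^0(x)$, $d^1(x)$ are the vertices obtained by repeatedly applying $d^0_1$, resp. $d^1_1$. A cube chain is a sequence $\mathbf c=((c_1,<_1),\dots,(c_l,<_l))$ of cubes of positive dimension with $d^0$ of the first equal to the initial vertex, $d^1$ of the last equal to the final vertex, and $d^1$ of each equal to $d^0$ of the next; it corresponds to a bi-pointed precubical map from the serial wedge $\square^{n_1}\vee\dots\vee\square^{n_l}$ of standard cubes to $Y^A$. The cube chain category $\mathrm{Ch}(Y^A)$ has these maps as objects and as morphisms $\mathbf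 a\to\mathbf b$ the precubical maps $f$ between the wedges with $\mathbf b\circ f=\mathbf a$. For a cube chain $\mathbf c$ and $a\in A$ there is a unique $h_{\mathbf c}(a)$ with $c_{h_{\mathbf c}(a)}(a)=*$; define $\overset{*}{<}_{\mathbf c}=(\overset{x}{<}_{\mathbf c},\overset{y}{<}_{\mathbf c})$ by $a\overset{x}{<}_{\mathbf c}b$ iff $h_{\mathbf c}(a)<h_{\mathbf c}(b)$, and $a\overset{y}{<}_{\mathbf c}b$ iff $h_{\mathbf c}(a)=h_{\mathbf c}(b)=j$ and $a<_jb$. A strict partial order is semi-linear if induced by a (unique) surjection $h:A\to\{1,\dots,l\}$ ($a<b$ iff $h(a)<h(b)$). A double order on $A$ is a pair $(\overset{x}{<},\overset{y}{<})$ of strict partial orders such that any two distinct elements are comparable by one of them; it is regular if $\overset{x}{<}$ is semi-linear and $a\overset{x}{<}b$ implies $a,b$ are not $\overset{y}{<}$-comparable. $R(A)$ is the set of regular double orders, and $\overset{*}{<}_1\sqsubseteq\overset{*}{<}_2$ iff $\overset{x}{<}_1\subseteq\overset{x}{<}_2$ and $\overset{y}{<}_1\supseteq\overset{y}{<}_2$ ($\sqsupseteq$ is the opposite order). For $\overset{*}{<}\in R(A)$ with $h=h(\overset{x}{<}):A\to\{1,\dots,l\}$, let $c_j(a)=1$ if $h(a)<j$, $*$ if $h(a)=j$, $0$ if $h(a)>j$, let $<_j$ be the restriction of $\overset{y}{<}$ to $h^{-1}(j)$, and $\mathbf c^{\overset{*}{<}}=((c_1,<_1),\dots,(c_l,<_l))$.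 $\Sigma_A$ acts on $Y^A$ by $(c,<)\sigma=(c\circ\sigma,<\sigma)$ with $a(<\sigma)b$ iff $\sigma(a)<\sigma(b)$, on cube chains cubewise, and on double orders by $(\overset{x}{<},\overset{y}{<})\sigma=(\overset{x}{<}\sigma,\overset{y}{<}\sigma)$. *)

theory Defs
  imports "HOL-Library.FuncSet" "HOL-Combinatorics.Permutations"
begin

(* values of coordinates: 0, *, 1 *)
datatype cval = C0 | CS | C1

definition eps :: "bool \<Rightarrow> cval" where
  "eps e = (if e then C1 else C0)"

(* ---------- generic precubical maps ----------
   a precubical set is given by a set of cells X, a dimension function dX
   (X[k] = {x \<in> X. dX x = k}) and face maps fX x i e = d^e_i x  (1 \<le> i \<le> dX x) *)
definition precub_map ::
  "('c \<Rightarrow> nat) \<Rightarrow> ('c \<Rightarrow> nat \<Rightarrow> bool \<Rightarrow> 'c) \<Rightarrow> 'c set \<Rightarrow>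
   ('d \<Rightarrow> nat) \<Rightarrow> ('d \<Rightarrow> nat \<Rightarrow> bool \<Rightarrow> 'd) \<Rightarrow> 'd set \<Rightarrow> ('c \<Rightarrow> 'd) \<Rightarrow> bool" where
  "precub_map dX fX X dY fY Y f \<longleftrightarrow>
     (\<forall>x\<in>X. f x \<in> Y \<and> dY (f x) = dX x \<and>
        (\<forall>i e. 1 \<le> i \<and> i \<le> dX x \<longrightarrow> f (fX x i e) = fY (f x) i e))"

(* ---------- standard cubes and serial wedges ----------
   a cell of \<box>^n is a list x \<in> {0,*,1}^n; d^e_i replaces the i-th * by e *)
fun repl_star :: "cval list \<Rightarrow> nat \<Rightarrow> cval \<Rightarrow> cval list" where
  "repl_star [] i v = []"
| "repl_star (w # xs) i v =
     (if w = CS then (if i = 1 then v # xs else w # repl_star xs (i - 1) v)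
      else w # repl_star xs i v)"

(* cells of the serial wedge \<box>^{n_1} \<or> ... \<or> \<box>^{n_l}: pairs (j, x) with x a cell of the
   (j+1)-th cube (0-based j); the final vertex of block j is identified with the initial
   vertex of block j+1, represented canonically by the latter.  The empty wedge (l = 0) is
   a single point. *)
definition wcells :: "nat list \<Rightarrow> (nat \<times> cval list) set" where
  "wcells ns = (if ns = [] then {(0, [])} else
     {(j, x). j < length ns \<and> length x = ns ! j \<and>
              \<not> (Suc j < length ns \<and> x = replicate (ns ! j) C1)})"

fun wdim :: "nat \<times> cval list \<Rightarrow> nat" where
  "wdim (j, x) = length (filter (\<lambda>v. v = CS) x)"

fun wcanon :: "nat list \<Rightarrow> nat \<times> cval list \<Rightarrow> nat \<times> cval list" where
  "wcanon ns (j, x) = (if Suc j < length ns \<and> x = replicate (ns ! j) C1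
       then (Suc j, replicate (ns ! Suc j) C0) else (j, x))"

fun wface :: "nat list \<Rightarrow> nat \<times> cval list \<Rightarrow> nat \<Rightarrow> bool \<Rightarrow> nat \<times> cval list" where
  "wface ns (j, x) i e = wcanon ns (j, repl_star x i (eps e))"

definition strict_total_on :: "'a set \<Rightarrow> 'a rel \<Rightarrow> bool" where
  "strict_total_on S r \<longleftrightarrow> r \<subseteq> S \<times> S \<and> irrefl r \<and> trans r \<and> total_on S r"

definition ystars :: "'a set \<Rightarrow> ('a \<Rightarrow> cval) \<Rightarrow> 'a set" where
  "ystars A c = {a \<in> A. c a = CS}"

definition ycells :: "'a set \<Rightarrow> (('a \<Rightarrow> cval) \<times> 'a rel) set" where
  "ycells A = {(c, r). c \<in> extensional A \<and> strict_total_on (ystars A c) r}"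

fun ydim :: "'a set \<Rightarrow> ('a \<Rightarrow> cval) \<times> 'a rel \<Rightarrow> nat" where
  "ydim A (c, r) = card (ystars A c)"

(* 0-based position of a in the order r *)
definition yrank :: "'a rel \<Rightarrow> 'a \<Rightarrow> nat" where
  "yrank r a = card {b. (b, a) \<in> r}"

fun yface :: "'a set \<Rightarrow> ('a \<Rightarrow> cval) \<times> 'a rel \<Rightarrow> nat \<Rightarrow> bool \<Rightarrow> ('a \<Rightarrow> cval) \<times> 'a rel" where
  "yface A (c, r) i e =
     (let a = (THE a. a \<in> ystars A c \<and> yrank r a = i - 1)
      in (c(a := eps e), Restr r (ystars A c - {a})))"

definition yinit :: "'a set \<Rightarrow> ('a \<Rightarrow> cval) \<times> 'a rel" where
  "yinit A = (restrict (\<lambda>_. C0) A, {})"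

definition yfinal :: "'a set \<Rightarrow> ('a \<Rightarrow> cval) \<times> 'a rel" where
  "yfinal A = (restrict (\<lambda>_. C1) A, {})"

definition yd0 :: "'a set \<Rightarrow> ('a \<Rightarrow> cval) \<times> 'a rel \<Rightarrow> ('a \<Rightarrow> cval) \<times> 'a rel" where
  "yd0 A y = ((\<lambda>z. yface A z 1 False) ^^ ydim A y) y"

definition yd1 :: "'a set \<Rightarrow> ('a \<Rightarrow> cval) \<times> 'a rel \<Rightarrow> ('a \<Rightarrow> cval) \<times> 'a rel" where
  "yd1 A y = ((\<lambda>z. yface A z 1 True) ^^ ydim A y) y"

definition cube_chains :: "'a set \<Rightarrow> (('a \<Rightarrow> cval) \<times> 'a rel) list set" where
  "cube_chains A = {cs. set cs \<subseteq> ycells A \<and> (\<forall>y\<in>set cs. 0 < ydim A y) \<and>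
      (if cs = [] then yinit A = yfinal A
       else yd0 A (hd cs) = yinit A \<and> yd1 A (last cs) = yfinal A) \<and>
      (\<forall>j. Suc j < length cs \<longrightarrow> yd1 A (cs ! j) = yd0 A (cs ! Suc j))}"

(* the face of the cube (c,r) corresponding to the cell x of \<box>^{dim (c,r)} *)
fun yapply :: "'a set \<Rightarrow> ('a \<Rightarrow> cval) \<times> 'a rel \<Rightarrow> cval list \<Rightarrow> ('a \<Rightarrow> cval) \<times> 'a rel" where
  "yapply A (c, r) x =
     ((\<lambda>a. if a \<in> ystars A c then x ! yrank r a else c a),
      Restr r {a \<in> ystars A c. x ! yrank r a = CS})"

(* the precubical map  \<box>^{n_1} \<or> ... \<or> \<box>^{n_l} \<rightarrow> Y^A  associated with a cube chain *)
fun chmap :: "'a set \<Rightarrow> (('a \<Rightarrow> cval) \<times> 'a rel) list \<Rightarrow> nat \<times> cval list \<Rightarrow> ('a \<Rightarrow> cval) \<times> 'a rel" where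
  "chmap A cs (j, x) = (if cs = [] then yinit A else yapply A (cs ! j) x)"

definition chain_dims :: "'a set \<Rightarrow> (('a \<Rightarrow> cval) \<times> 'a rel) list \<Rightarrow> nat list" where
  "chain_dims A cs = map (ydim A) cs"

definition chain_le :: "'a set \<Rightarrow> (('a \<Rightarrow> cval) \<times> 'a rel) list \<Rightarrow> (('a \<Rightarrow> cval) \<times> 'a rel) list \<Rightarrow> bool" where
  "chain_le A cs es \<longleftrightarrow>
     (\<exists>f. precub_map wdim (wface (chain_dims A cs)) (wcells (chain_dims A cs))
                     wdim (wface (chain_dims A es)) (wcells (chain_dims A es)) f \<and>
          (\<forall>x\<in>wcells (chain_dims A cs). chmap A es (f x) = chmap A cs x))"

(* h_c(a) (0-based) and the double order of a cube chain *)
definition hidx :: "(('a \<Rightarrow> cval) \<times> 'a rel) list \<Rightarrow> 'a \<Rightarrow> nat" where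
  "hidx cs a = (THE j. j < length cs \<and> fst (cs ! j) a = CS)"

definition dorder :: "'a set \<Rightarrow> (('a \<Rightarrow> cval) \<times> 'a rel) list \<Rightarrow> 'a rel \<times> 'a rel" where
  "dorder A cs =
     ({(a, b). a \<in> A \<and> b \<in> A \<and> hidx cs a < hidx cs b},
      {(a, b). a \<in> A \<and> b \<in> A \<and> hidx cs a = hidx cs b \<and> (a, b) \<in> snd (cs ! hidx cs a)})"

definition spo_on :: "'a set \<Rightarrow> 'a rel \<Rightarrow> bool" where
  "spo_on A r \<longleftrightarrow> r \<subseteq> A \<times> A \<and> irrefl r \<and> trans r"

fun double_order :: "'a set \<Rightarrow> 'a rel \<times> 'a rel \<Rightarrow> bool" where
  "double_order A (X, Y) \<longleftrightarrow> spo_on A X \<and> spo_on A Y \<and>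
     (\<forall>a\<in>A. \<forall>b\<in>A. a \<noteq> b \<longrightarrow> (a, b) \<in> X \<or> (b, a) \<in> X \<or> (a, b) \<in> Y \<or> (b, a) \<in> Y)"

definition induced_by :: "'a set \<Rightarrow> ('a \<Rightarrow> nat) \<Rightarrow> nat \<Rightarrow> 'a rel \<Rightarrow> bool" where
  "induced_by A h l X \<longleftrightarrow> h ` A = {1..l} \<and> X = {(a, b). a \<in> A \<and> b \<in> A \<and> h a < h b}"

definition semilinear :: "'a set \<Rightarrow> 'a rel \<Rightarrow> bool" where
  "semilinear A X \<longleftrightarrow> (\<exists>h l. induced_by A h l X)"

fun regular :: "'a set \<Rightarrow> 'a rel \<times> 'a rel \<Rightarrow> bool" where
  "regular A (X, Y) \<longleftrightarrow> double_order A (X, Y) \<and> semilinear A X \<and>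
     (\<forall>a b. (a, b) \<in> X \<longrightarrow> (a, b) \<notin> Y \<and> (b, a) \<notin> Y)"

definition regular_dorders :: "'a set \<Rightarrow> ('a rel \<times> 'a rel) set" where
  "regular_dorders A = {d. regular A d}"

fun dle :: "'a rel \<times> 'a rel \<Rightarrow> 'a rel \<times> 'a rel \<Rightarrow> bool" where
  "dle (X1, Y1) (X2, Y2) \<longleftrightarrow> X1 \<subseteq> X2 \<and> Y2 \<subseteq> Y1"

(* the unique surjection h(X) (made unique on the nose by extensionality) *)
definition hfun :: "'a set \<Rightarrow> 'a rel \<Rightarrow> 'a \<Rightarrow> nat" where
  "hfun A X = (THE h. h \<in> extensional A \<and> (\<exists>l. induced_by A h l X))"

fun chain_of :: "'a set \<Rightarrow> 'a rel \<times> 'a rel \<Rightarrow> (('a \<Rightarrow> cval) \<times> 'a rel) list" where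
  "chain_of A (X, Y) =
     (let h = hfun A X; l = card (h ` A) in
      map (\<lambda>j. (restrict (\<lambda>a. if h a < j then C1 else if h a = j then CS else C0) A,
                 Restr Y {a \<in> A. h a = j}))
          [1..<Suc l])"

definition rel_act :: "'a rel \<Rightarrow> ('a \<Rightarrow> 'a) \<Rightarrow> 'a rel" where
  "rel_act r \<sigma> = {(a, b). (\<sigma> a, \<sigma> b) \<in> r}"

fun cube_act :: "('a \<Rightarrow> cval) \<times> 'a rel \<Rightarrow> ('a \<Rightarrow> 'a) \<Rightarrow> ('a \<Rightarrow> cval) \<times> 'a rel" where
  "cube_act (c, r) \<sigma> = (c \<circ> \<sigma>, rel_act r \<sigma>)"

definition chain_act :: "(('a \<Rightarrow> cval) \<times> 'a rel) list \<Rightarrow> ('a \<Rightarrow> 'a) \<Rightarrow> (('a \<Rightarrow> cval) \<times> 'a rel) list" where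
  "chain_act cs \<sigma> = map (\<lambda>y. cube_act y \<sigma>) cs"

fun dorder_act :: "'a rel \<times> 'a rel \<Rightarrow> ('a \<Rightarrow> 'a) \<Rightarrow> 'a rel \<times> 'a rel" where
  "dorder_act (X, Y) \<sigma> = (rel_act X \<sigma>, rel_act Y \<sigma>)"

end

(* A cube chain c is determined by the map h_c, sending a to the unique cube in which a is a free
   coordinate, together with the orders on the free coordinates of each cube: along the chain the
   coordinate of a is 0 before its cube and 1 after it, because consecutive cubes are glued
   final vertex to initial vertex.  Since regular double orders are exactly such data, the two
   maps are mutually inverse.
   A morphism of cube chains is determined by the images of the wedge maps, which are the sets of
   faces of the cubes; so c <= e iff every cube of c is a face of a cube of e.  For the k-th cube
   of c to be a face of the j-th cube of e means that the level k of h_c lies inside level j of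
   h_e, the levels below and above it stay below and above, and the order of level k is
   restricted from that of level j: these are exactly the two inclusions defining the order on
   double orders. *)

theory Submission
  imports Defs
begin

type_synonym 'a cube = "('a \<Rightarrow> cval) \<times> 'a rel"

section \<open>Ranks in a finite strict total order\<close>

lemma strict_total_onD:
  assumes "strict_total_on S r"
  shows "r \<subseteq> S \<times> S" "(a, a) \<notin> r" "(a, b) \<in> r \<Longrightarrow> (b, c) \<in> r \<Longrightarrow> (a, c) \<in> r"
    "a \<in> S \<Longrightarrow> b \<in> S \<Longrightarrow> a \<noteq> b \<Longrightarrow> (a, b) \<in> r \<or> (b, a) \<in> r"
  using assms unfolding strict_total_on_def irrefl_on_def trans_def total_on_def by blast+

lemma strict_total_on_Restr:
  "strict_total_on S r \<Longrightarrow> T \<subseteq> S \<Longrightarrow> strict_total_on T (Restr r T)"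
  unfolding strict_total_on_def irrefl_on_def trans_def total_on_def by blast

lemma yrank_less_iff:
  assumes st: "strict_total_on S r" and fin: "finite S" and a: "a \<in> S" and b: "b \<in> S"
  shows "yrank r a < yrank r b \<longleftrightarrow> (a, b) \<in> r"
proof -
  have less: "yrank r x < yrank r y" if "(x, y) \<in> r" for x y
  proof -
    have "{z. (z, x) \<in> r} \<subset> {z. (z, y) \<in> r}"
      using strict_total_onD[OF st] that by blast
    moreover have "finite {z. (z, y) \<in> r}"
      using strict_total_onD(1)[OF st] fin by (auto intro: finite_subset[of _ S])
    ultimately show ?thesis unfolding yrank_def by (rule psubset_card_mono[rotated])
  qed
  show ?thesis
    using less[of a b] less[of b a] strict_total_onD(4)[OF st a b] by fastforce
qed

lemma yrank_less_card:
  assumes "strict_total_on S r" "finite S" "a \<in> S"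
  shows "yrank r a < card S"
proof -
  have "{z. (z, a) \<in> r} \<subset> S" using strict_total_onD[OF assms(1)] assms(3) by blast
  then show ?thesis unfolding yrank_def using assms(2) by (rule psubset_card_mono[rotated])
qed

lemma inj_on_yrank:
  assumes "strict_total_on S r" "finite S"
  shows "inj_on (yrank r) S"
  by (rule inj_onI) (metis assms strict_total_onD(4) yrank_less_iff less_irrefl)

lemma bij_betw_yrank:
  assumes "strict_total_on S r" "finite S"
  shows "bij_betw (yrank r) S {..<card S}"
proof -
  have "yrank r ` S \<subseteq> {..<card S}" using yrank_less_card[OF assms] by auto
  moreover have "card (yrank r ` S) = card {..<card S}"
    using card_image[OF inj_on_yrank[OF assms]] by simp
  ultimately show ?thesis
    using inj_on_yrank[OF assms] by (simp add: bij_betw_def card_subset_eq)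
qed

lemma yrank_surj:
  assumes "strict_total_on S r" "finite S" "k < card S"
  obtains a where "a \<in> S" "yrank r a = k"
  using bij_betw_yrank[OF assms(1,2)] assms(3) that by (metis bij_betw_def imageE lessThan_iff)

lemma the_yrank_eq:
  assumes "strict_total_on S r" "finite S" "a \<in> S"
  shows "(THE b. b \<in> S \<and> yrank r b = yrank r a) = a"
  using inj_on_yrank[OF assms(1,2)] assms(3) by (auto dest: inj_onD)

lemma yrank_Restr:
  assumes st: "strict_total_on S r" and fin: "finite S" and a: "a \<in> T" and T: "T \<subseteq> S"
  shows "yrank (Restr r T) a = card {k. k < yrank r a \<and> k \<in> yrank r ` T}"
proof -
  define B where "B = {b \<in> T. yrank r b < yrank r a}"
  have "(b, a) \<in> Restr r T \<longleftrightarrow> b \<in> B" for b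
  proof (cases "b \<in> T")
    case True
    then show ?thesis using yrank_less_iff[OF st fin, of b a] a T unfolding B_def by blast
  qed (simp add: B_def)
  then have "yrank (Restr r T) a = card B"
    unfolding yrank_def[of "Restr r T"] by simp
  also have "\<dots> = card (yrank r ` B)"
    using inj_on_yrank[OF st fin] T unfolding B_def by (simp add: card_image inj_on_def subset_iff)
  also have "yrank r ` B = {k. k < yrank r a \<and> k \<in> yrank r ` T}"
    unfolding B_def by blast
  finally show ?thesis .
qed

section \<open>Faces in \<open>Y\<^sup>A\<close>\<close>

lemma ycells_iff [simp]: "(c, r) \<in> ycells A \<longleftrightarrow> c \<in> extensional A \<and> strict_total_on (ystars A c) r"
  by (simp add: ycells_def)

lemma finite_ystars: "finite A \<Longrightarrow> finite (ystars A c)"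
  unfolding ystars_def by simp

lemma eps_neq_CS [simp]: "eps e \<noteq> CS" "CS \<noteq> eps e"
  by (auto simp: eps_def)

lemma eps_simps [simp]: "eps True = C1" "eps False = C0"
  by (auto simp: eps_def)

lemma ydim_eq_card: "ydim A y = card (ystars A (fst y))"
  by (cases y) simp

lemma yface_eq:
  assumes fin: "finite A" and yc: "(c, r) \<in> ycells A" and i: "1 \<le> i" "i \<le> card (ystars A c)"
  obtains a where "a \<in> ystars A c" "yrank r a = i - 1"
    "yface A (c, r) i e = (c(a := eps e), Restr r (ystars A c - {a}))"
proof -
  have st: "strict_total_on (ystars A c) r" using yc by simp
  have "i - 1 < card (ystars A c)" using i by simp
  then obtain a where a: "a \<in> ystars A c" "yrank r a = i - 1"
    using yrank_surj[OF st finite_ystars[OF fin]] by blast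
  then have "(THE a. a \<in> ystars A c \<and> yrank r a = i - 1) = a"
    using the_yrank_eq[OF st finite_ystars[OF fin]] by metis
  then show ?thesis using that a by (simp add: Let_def)
qed

lemma iterated_first_face:
  assumes fin: "finite A"
  shows "(c, r) \<in> ycells A \<Longrightarrow> n = card (ystars A c) \<Longrightarrow>
    ((\<lambda>z. yface A z 1 e) ^^ n) (c, r) = (\<lambda>a. if a \<in> ystars A c then eps e else c a, {})"
proof (induction n arbitrary: c r)
  case 0
  then show ?case using finite_ystars[OF fin] strict_total_onD(1)[of "ystars A c" r] by simp
next
  case (Suc n)
  obtain a where a: "a \<in> ystars A c"
    and face: "yface A (c, r) 1 e = (c(a := eps e), Restr r (ystars A c - {a}))"
    using yface_eq[OF fin Suc.prems(1), of 1 e] Suc.prems(2) by auto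
  have stars: "ystars A (c(a := eps e)) = ystars A c - {a}"
    using a by (auto simp: ystars_def)
  have "(c(a := eps e), Restr r (ystars A c - {a})) \<in> ycells A"
    using Suc.prems(1) a stars strict_total_on_Restr[of "ystars A c" r "ystars A c - {a}"]
    by (auto simp: extensional_def ystars_def)
  moreover have "n = card (ystars A (c(a := eps e)))"
    using stars Suc.prems(2) a finite_ystars[OF fin] by simp
  ultimately have "((\<lambda>z. yface A z 1 e) ^^ n) (c(a := eps e), Restr r (ystars A c - {a}))
      = (\<lambda>b. if b \<in> ystars A (c(a := eps e)) then eps e else (c(a := eps e)) b, {})"
    by (rule Suc.IH)
  also have "\<dots> = (\<lambda>b. if b \<in> ystars A c then eps e else c b, {})"
    using stars a by (auto simp: fun_eq_iff)
  finally show ?case by (simp only: funpow_Suc_right o_apply face)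
qed

lemma yd0_eq:
  "finite A \<Longrightarrow> (c, r) \<in> ycells A \<Longrightarrow> yd0 A (c, r) = (\<lambda>a. if a \<in> ystars A c then C0 else c a, {})"
  unfolding yd0_def using iterated_first_face[of A c r "card (ystars A c)" False]
  by (simp add: fun_eq_iff)

lemma yd1_eq:
  "finite A \<Longrightarrow> (c, r) \<in> ycells A \<Longrightarrow> yd1 A (c, r) = (\<lambda>a. if a \<in> ystars A c then C1 else c a, {})"
  unfolding yd1_def using iterated_first_face[of A c r "card (ystars A c)" True]
  by (simp add: fun_eq_iff)

section \<open>The face of a cube named by a word over \<open>{0,*,1}\<close>\<close>

abbreviation nstars :: "cval list \<Rightarrow> nat" where
  "nstars x \<equiv> length (filter (\<lambda>v. v = CS) x)"

lemma length_repl_star [simp]: "length (repl_star x i v) = length x"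
  by (induction x arbitrary: i) auto

lemma repl_star_eq_list_update:
  "1 \<le> i \<Longrightarrow> i \<le> nstars x \<Longrightarrow>
   \<exists>m<length x. x ! m = CS \<and> nstars (take m x) = i - 1 \<and> repl_star x i v = x[m := v]"
proof (induction x arbitrary: i)
  case Nil
  then show ?case by simp
next
  case (Cons w xs)
  show ?case
  proof (cases "w = CS \<and> i = 1")
    case True
    then show ?thesis by (intro exI[of _ 0]) simp
  next
    case False
    define i' where "i' = (if w = CS then i - 1 else i)"
    have "1 \<le> i'" "i' \<le> nstars xs" using Cons.prems False unfolding i'_def by auto
    then obtain m where "m < length xs" "xs ! m = CS" "nstars (take m xs) = i' - 1"
        "repl_star xs i' v = xs[m := v]"
      using Cons.IH by blast
    then show ?thesis using False \<open>1 \<le> i'\<close> unfolding i'_def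
      by (intro exI[of _ "Suc m"]) (auto split: if_splits)
  qed
qed

lemma nstars_take: "m \<le> length x \<Longrightarrow> nstars (take m x) = card {k. k < m \<and> x ! k = CS}"
  by (simp add: length_filter_conv_card min_def cong: conj_cong)

lemma ystars_yapply:
  "ystars A (\<lambda>a. if a \<in> ystars A c then x ! yrank r a else c a) = {a \<in> ystars A c. x ! yrank r a = CS}"
  by (auto simp: ystars_def)

lemma yrank_image_ystars_yapply:
  assumes fin: "finite A" and yc: "(c, r) \<in> ycells A" and len: "length x = card (ystars A c)"
  shows "yrank r ` {a \<in> ystars A c. x ! yrank r a = CS} = {k. k < length x \<and> x ! k = CS}"
proof -
  have st: "strict_total_on (ystars A c) r" using yc by simp
  show ?thesis
  proof (intro set_eqI iffI)
    fix k
    assume "k \<in> yrank r ` {a \<in> ystars A c. x ! yrank r a = CS}"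
    then show "k \<in> {k. k < length x \<and> x ! k = CS}"
      using yrank_less_card[OF st finite_ystars[OF fin]] len by auto
  next
    fix k
    assume k: "k \<in> {k. k < length x \<and> x ! k = CS}"
    then have "k < card (ystars A c)" using len by simp
    then obtain a where "a \<in> ystars A c" "yrank r a = k"
      using yrank_surj[OF st finite_ystars[OF fin]] by blast
    then show "k \<in> yrank r ` {a \<in> ystars A c. x ! yrank r a = CS}" using k by blast
  qed
qed

lemma ydim_yapply:
  assumes fin: "finite A" and yc: "(c, r) \<in> ycells A" and len: "length x = card (ystars A c)"
  shows "ydim A (yapply A (c, r) x) = nstars x"
proof -
  have "inj_on (yrank r) {a \<in> ystars A c. x ! yrank r a = CS}"
    using inj_on_yrank[of "ystars A c" r] yc finite_ystars[OF fin] by (simp add: inj_on_def)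
  then have "card {a \<in> ystars A c. x ! yrank r a = CS} = card {k. k < length x \<and> x ! k = CS}"
    unfolding yrank_image_ystars_yapply[OF assms, symmetric] by (rule card_image[symmetric])
  then show ?thesis by (simp add: ystars_yapply length_filter_conv_card)
qed

lemma yapply_replicate:
  assumes fin: "finite A" and yc: "(c, r) \<in> ycells A"
  shows "yapply A (c, r) (replicate (card (ystars A c)) v) =
     ((\<lambda>a. if a \<in> ystars A c then v else c a), if v = CS then r else {})"
  using yrank_less_card[of "ystars A c" r] strict_total_onD(1)[of "ystars A c" r]
    yc finite_ystars[OF fin] by (auto simp: fun_eq_iff)

lemma yapply_replicate_C0:
  "finite A \<Longrightarrow> (c, r) \<in> ycells A \<Longrightarrow> yapply A (c, r) (replicate (card (ystars A c)) C0) = yd0 A (c, r)"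
  using yapply_replicate[of A c r C0] yd0_eq[of A c r] by simp

lemma yapply_replicate_C1:
  "finite A \<Longrightarrow> (c, r) \<in> ycells A \<Longrightarrow> yapply A (c, r) (replicate (card (ystars A c)) C1) = yd1 A (c, r)"
  using yapply_replicate[of A c r C1] yd1_eq[of A c r] by simp

lemma yrank_Restr_ystars_yapply:
  assumes fin: "finite A" and yc: "(c, r) \<in> ycells A" and len: "length x = card (ystars A c)"
    and a: "a \<in> {a \<in> ystars A c. x ! yrank r a = CS}"
  shows "yrank (Restr r {a \<in> ystars A c. x ! yrank r a = CS}) a = nstars (take (yrank r a) x)"
proof -
  have st: "strict_total_on (ystars A c) r" using yc by simp
  have "yrank r a < length x" using yrank_less_card[OF st finite_ystars[OF fin]] a len by simp
  then have "{k. k < yrank r a \<and> k \<in> {k. k < length x \<and> x ! k = CS}} = {k. k < yrank r a \<and> x ! k = CS}"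
    by auto
  then show ?thesis
    using yrank_Restr[OF st finite_ystars[OF fin] a] yrank_image_ystars_yapply[OF fin yc len]
      nstars_take[of "yrank r a" x] \<open>yrank r a < length x\<close> by simp
qed

lemma yface_yapply:
  assumes fin: "finite A" and yc: "(c, r) \<in> ycells A" and len: "length x = card (ystars A c)"
    and i: "1 \<le> i" "i \<le> nstars x"
  shows "yface A (yapply A (c, r) x) i e = yapply A (c, r) (repl_star x i (eps e))"
proof -
  define S where "S = ystars A c"
  define T where "T = {a \<in> S. x ! yrank r a = CS}"
  have st: "strict_total_on S r" using yc by (simp add: S_def)
  have fS: "finite S" unfolding S_def by (rule finite_ystars[OF fin])
  obtain m where m: "m < length x" "x ! m = CS" "nstars (take m x) = i - 1"
    and repl: "repl_star x i (eps e) = x[m := eps e]"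
    using repl_star_eq_list_update[OF i] by blast
  have "m < card S" using m(1) len by (simp add: S_def)
  then obtain a0 where a0: "a0 \<in> S" "yrank r a0 = m" using yrank_surj[OF st fS] by blast
  have a0T: "a0 \<in> T" using a0 m(2) unfolding T_def by simp
  have "yrank (Restr r T) a0 = i - 1"
    using yrank_Restr_ystars_yapply[OF fin yc len] a0T a0(2) m(3) unfolding T_def S_def by simp
  moreover have "strict_total_on T (Restr r T)"
    by (rule strict_total_on_Restr[OF st]) (simp add: T_def)
  moreover have "finite T" using fS unfolding T_def by simp
  ultimately have "(THE a. a \<in> T \<and> yrank (Restr r T) a = i - 1) = a0"
    using the_yrank_eq[of T "Restr r T" a0] a0T by simp
  then have lhs: "yface A (yapply A (c, r) x) i e =
      ((\<lambda>a. if a \<in> S then x ! yrank r a else c a)(a0 := eps e), Restr r (T - {a0}))"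
    unfolding S_def T_def by (auto simp: ystars_yapply Let_def)
  have upd: "x[m := eps e] ! yrank r a = (if a = a0 then eps e else x ! yrank r a)" if "a \<in> S" for a
    using inj_on_yrank[OF st fS] yrank_less_card[OF st fS] that a0 m(1) len
    by (auto simp: nth_list_update S_def dest: inj_onD)
  have "(\<lambda>a. if a \<in> S then x[m := eps e] ! yrank r a else c a) =
      (\<lambda>a. if a \<in> S then x ! yrank r a else c a)(a0 := eps e)"
    using upd a0(1) by (auto simp: fun_eq_iff)
  moreover have "{a \<in> S. x[m := eps e] ! yrank r a = CS} = T - {a0}"
    using upd unfolding T_def by (auto split: if_splits)
  ultimately show ?thesis using lhs repl by (simp add: S_def)
qed

definition face_of_cube :: "'a set \<Rightarrow> 'a cube \<Rightarrow> 'a cube \<Rightarrow> bool" where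
  "face_of_cube A y x \<longleftrightarrow> fst y \<in> extensional A \<and> (\<forall>a\<in>A. fst x a \<noteq> CS \<longrightarrow> fst y a = fst x a) \<and>
     snd y = Restr (snd x) (ystars A (fst y))"

lemma ystars_face_of_cube: "face_of_cube A y x \<Longrightarrow> ystars A (fst y) \<subseteq> ystars A (fst x)"
  unfolding face_of_cube_def ystars_def by auto

lemma face_of_cube_refl: "x \<in> ycells A \<Longrightarrow> face_of_cube A x x"
  using strict_total_onD(1)[of "ystars A (fst x)" "snd x"]
  by (cases x) (auto simp: face_of_cube_def)

lemma face_of_cube_trans: "face_of_cube A z y \<Longrightarrow> face_of_cube A y x \<Longrightarrow> face_of_cube A z x"
  using ystars_face_of_cube[of A z y] unfolding face_of_cube_def
  by (metis Int_absorb2 Int_lower1 Restr_subset)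

lemma face_of_cube_yapply: "(c, r) \<in> ycells A \<Longrightarrow> face_of_cube A (yapply A (c, r) x) (c, r)"
  by (auto simp: face_of_cube_def ystars_yapply extensional_def ystars_def)

lemma face_of_cube_obtain_yapply:
  assumes fin: "finite A" and yc: "(c, r) \<in> ycells A" and face: "face_of_cube A y (c, r)"
  obtains x where "length x = card (ystars A c)" "yapply A (c, r) x = y"
proof -
  have st: "strict_total_on (ystars A c) r" using yc by simp
  define x where "x = map (\<lambda>k. fst y (THE a. a \<in> ystars A c \<and> yrank r a = k)) [0..<card (ystars A c)]"
  have x_yrank: "x ! yrank r a = fst y a" if "a \<in> ystars A c" for a
    using yrank_less_card[OF st finite_ystars[OF fin] that] the_yrank_eq[OF st finite_ystars[OF fin] that]
    by (simp add: x_def)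
  have "(\<lambda>a. if a \<in> ystars A c then x ! yrank r a else c a) = fst y"
    using face yc x_yrank by (auto simp: fun_eq_iff face_of_cube_def extensional_def ystars_def)
  moreover have "{a \<in> ystars A c. x ! yrank r a = CS} = ystars A (fst y)"
    using ystars_face_of_cube[OF face] x_yrank by (auto simp: ystars_def)
  ultimately have "yapply A (c, r) x = y"
    using face by (simp add: face_of_cube_def prod_eq_iff)
  moreover have "length x = card (ystars A c)" by (simp add: x_def)
  ultimately show ?thesis using that by blast
qed

lemma yapply_inject:
  assumes fin: "finite A" and yc: "(c, r) \<in> ycells A"
    and len: "length x1 = card (ystars A c)" "length x2 = card (ystars A c)"
    and eq: "yapply A (c, r) x1 = yapply A (c, r) x2"
  shows "x1 = x2"
proof (rule nth_equalityI)
  show "length x1 = length x2" using len by simp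
  have st: "strict_total_on (ystars A c) r" using yc by simp
  fix k
  assume "k < length x1"
  then obtain a where a: "a \<in> ystars A c" "yrank r a = k"
    using yrank_surj[OF st finite_ystars[OF fin]] len by metis
  then show "x1 ! k = x2 ! k"
    using fun_cong[OF arg_cong[OF eq, of fst], of a] by simp
qed

section \<open>The shape of a cube chain\<close>

definition start_coord :: "cval \<Rightarrow> cval" where
  "start_coord v = (if v = CS then C0 else v)"

definition end_coord :: "cval \<Rightarrow> cval" where
  "end_coord v = (if v = CS then C1 else v)"

lemma fst_yd0:
  "finite A \<Longrightarrow> (c, r) \<in> ycells A \<Longrightarrow> a \<in> A \<Longrightarrow> fst (yd0 A (c, r)) a = start_coord (c a)"
  by (simp add: yd0_eq start_coord_def ystars_def)

lemma fst_yd1: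
  "finite A \<Longrightarrow> (c, r) \<in> ycells A \<Longrightarrow> a \<in> A \<Longrightarrow> fst (yd1 A (c, r)) a = end_coord (c a)"
  by (simp add: yd1_eq end_coord_def ystars_def)

lemma glued_coords_C0_before_star:
  assumes start: "start_coord (v 0) = C0"
    and glue: "\<And>j. Suc j < n \<Longrightarrow> end_coord (v j) = start_coord (v (Suc j))"
  shows "j < n \<Longrightarrow> \<forall>i\<le>j. v i \<noteq> CS \<Longrightarrow> v j = C0"
proof (induction j)
  case 0
  then show ?case using start by (auto simp: start_coord_def)
next
  case (Suc j)
  then have "v j = C0" by auto
  then show ?case
    using glue[of j] Suc.prems by (auto simp: start_coord_def end_coord_def split: if_splits)
qed

lemma glued_coords_C1_after_star:
  assumes glue: "\<And>j. Suc j < n \<Longrightarrow> end_coord (v j) = start_coord (v (Suc j))"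
    and star: "v k = CS"
  shows "k < j \<Longrightarrow> j < n \<Longrightarrow> v j = C1"
proof (induction j)
  case (Suc j)
  then have "end_coord (v j) = C1"
    using star by (cases "j = k") (auto simp: end_coord_def)
  then show ?case
    using glue[of j] Suc.prems by (auto simp: start_coord_def split: if_splits)
qed simp

lemma glued_coords_shape:
  assumes n: "0 < n" and start: "start_coord (v 0) = C0"
    and glue: "\<And>j. Suc j < n \<Longrightarrow> end_coord (v j) = start_coord (v (Suc j))"
    and final: "end_coord (v (n - 1)) = C1"
  obtains k where "k < n" "\<And>j. j < n \<Longrightarrow> v j = (if j < k then C0 else if j = k then CS else C1)"
proof -
  have "\<exists>k<n. v k = CS"
  proof (rule ccontr)
    assume "\<not> ?thesis"
    then have "v (n - 1) = C0"
      using glued_coords_C0_before_star[OF start glue, where j = "n - 1"] n by auto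
    then show False using final by (simp add: end_coord_def)
  qed
  then obtain k where k: "k < n" "v k = CS" "\<And>i. i < k \<Longrightarrow> v i \<noteq> CS"
    using exists_least_iff[of "\<lambda>k. k < n \<and> v k = CS"] by (auto dest: less_trans)
  have "v j = (if j < k then C0 else if j = k then CS else C1)" if "j < n" for j
    using glued_coords_C0_before_star[OF start glue, where j = j]
      glued_coords_C1_after_star[OF glue k(2), where j = j]
      k that by auto
  then show ?thesis using that k(1) by blast
qed

(* The coordinates c_j of the j-th cube of the paper's chain for a regular double order whose
   x-order is induced by h; every cube chain has cubes of this form, with h = hidx
   (cube_chain_nth). *)
definition level_coords :: "'a set \<Rightarrow> ('a \<Rightarrow> nat) \<Rightarrow> nat \<Rightarrow> 'a \<Rightarrow> cval" where
  "level_coords A h j = restrict (\<lambda>a. if h a < j then C1 else if h a = j then CS else C0) A"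

lemma level_coords_in_extensional [simp]: "level_coords A h j \<in> extensional A"
  by (simp add: level_coords_def)

lemma ystars_level_coords [simp]: "ystars A (level_coords A h j) = {a \<in> A. h a = j}"
  by (auto simp: ystars_def level_coords_def)

lemma cube_chainsD:
  assumes "cs \<in> cube_chains A"
  shows "set cs \<subseteq> ycells A" "y \<in> set cs \<Longrightarrow> 0 < ydim A y"
    "cs = [] \<Longrightarrow> yinit A = yfinal A"
    "cs \<noteq> [] \<Longrightarrow> yd0 A (hd cs) = yinit A"
    "cs \<noteq> [] \<Longrightarrow> yd1 A (last cs) = yfinal A"
    "Suc j < length cs \<Longrightarrow> yd1 A (cs ! j) = yd0 A (cs ! Suc j)"
  using assms unfolding cube_chains_def by (auto split: if_splits)

lemma nth_cube_chain_in_ycells: "cs \<in> cube_chains A \<Longrightarrow> j < length cs \<Longrightarrow> cs ! j \<in> ycells A"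
  using cube_chainsD(1) nth_mem by blast

lemma cube_chain_eq_Nil_iff:
  assumes cs: "cs \<in> cube_chains A"
  shows "cs = [] \<longleftrightarrow> A = {}"
proof
  assume "cs = []"
  then have "yinit A = yfinal A" using cube_chainsD(3)[OF cs] by simp
  then show "A = {}" by (auto simp: yinit_def yfinal_def fun_eq_iff restrict_def split: if_splits)
next
  assume "A = {}"
  then have "ydim A y = 0" for y by (cases y) (simp add: ystars_def)
  then show "cs = []" using cube_chainsD(2)[OF cs] by (cases cs) auto
qed

lemma cube_chain_coord:
  assumes fin: "finite A" and cs: "cs \<in> cube_chains A" and a: "a \<in> A"
  shows "hidx cs a < length cs"
    "j < length cs \<Longrightarrow> fst (cs ! j) a = (if hidx cs a < j then C1 else if hidx cs a = j then CS else C0)"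
proof -
  define n where "n = length cs"
  define v where "v j = fst (cs ! j) a" for j
  have ne: "cs \<noteq> []" using cube_chain_eq_Nil_iff[OF cs] a by auto
  then have n: "0 < n" unfolding n_def by simp
  have cell: "(fst (cs ! j), snd (cs ! j)) \<in> ycells A" if "j < n" for j
    using nth_cube_chain_in_ycells[OF cs] that unfolding n_def by simp
  have "fst (yd0 A (cs ! 0)) a = C0"
    using cube_chainsD(4)[OF cs ne] a by (simp add: yinit_def hd_conv_nth[OF ne])
  then have start: "start_coord (v 0) = C0"
    using fst_yd0[OF fin cell[OF n] a] unfolding v_def by simp
  have "fst (yd1 A (cs ! (n - 1))) a = C1"
    using cube_chainsD(5)[OF cs ne] a by (simp add: yfinal_def last_conv_nth[OF ne] n_def)
  then have final: "end_coord (v (n - 1)) = C1"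
    using fst_yd1[OF fin cell[of "n - 1"] a] n unfolding v_def by simp
  have glue: "end_coord (v j) = start_coord (v (Suc j))" if "Suc j < n" for j
    using cube_chainsD(6)[OF cs, of j] fst_yd1[OF fin cell[of j] a] fst_yd0[OF fin cell[of "Suc j"] a] that
    unfolding v_def n_def by simp
  obtain k where k: "k < n" "\<And>j. j < n \<Longrightarrow> v j = (if j < k then C0 else if j = k then CS else C1)"
    using glued_coords_shape[OF n start glue final] by blast
  have "hidx cs a = k"
    unfolding hidx_def using k unfolding v_def n_def
    by (intro the_equality) (auto split: if_splits)
  then show "hidx cs a < length cs"
    "j < length cs \<Longrightarrow> fst (cs ! j) a = (if hidx cs a < j then C1 else if hidx cs a = j then CS else C0)"
    using k unfolding v_def n_def by auto
qed

lemma cube_chain_nth: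
  assumes fin: "finite A" and cs: "cs \<in> cube_chains A" and j: "j < length cs"
  shows "cs ! j = (level_coords A (hidx cs) j, snd (cs ! j))"
proof -
  have "fst (cs ! j) \<in> extensional A"
    using nth_cube_chain_in_ycells[OF cs j] by (cases "cs ! j") simp
  then have "fst (cs ! j) = level_coords A (hidx cs) j"
    using cube_chain_coord(2)[OF fin cs _ j] by (auto simp: fun_eq_iff level_coords_def extensional_def)
  then show ?thesis by (metis prod.collapse)
qed

lemma ydim_cube_chain_nth:
  "finite A \<Longrightarrow> cs \<in> cube_chains A \<Longrightarrow> j < length cs \<Longrightarrow> ydim A (cs ! j) = card {a \<in> A. hidx cs a = j}"
proof -
  assume "finite A" "cs \<in> cube_chains A" "j < length cs"
  then have "fst (cs ! j) = level_coords A (hidx cs) j"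
    using arg_cong[OF cube_chain_nth, of A cs j fst] by simp
  then show ?thesis by (simp add: ydim_eq_card)
qed

lemma cube_chain_level_nonempty:
  assumes fin: "finite A" and cs: "cs \<in> cube_chains A" and j: "j < length cs"
  obtains a where "a \<in> A" "hidx cs a = j"
proof -
  have "0 < ydim A (cs ! j)" using cube_chainsD(2)[OF cs] j by simp
  then have "{a \<in> A. hidx cs a = j} \<noteq> {}"
    using ydim_cube_chain_nth[OF fin cs j] by (auto simp: card_gt_0_iff)
  then show ?thesis using that by blast
qed

lemma strict_total_on_cube_chain_nth:
  assumes fin: "finite A" and cs: "cs \<in> cube_chains A" and j: "j < length cs"
  shows "strict_total_on {a \<in> A. hidx cs a = j} (snd (cs ! j))"
  using nth_cube_chain_in_ycells[OF cs j] by (subst (asm) cube_chain_nth[OF fin cs j]) simp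

section \<open>The wedge map of a cube chain\<close>

lemma wcells_iff:
  "ns \<noteq> [] \<Longrightarrow> (j, x) \<in> wcells ns \<longleftrightarrow>
     j < length ns \<and> length x = ns ! j \<and> \<not> (Suc j < length ns \<and> x = replicate (ns ! j) C1)"
  by (simp add: wcells_def)

lemma length_chain_dims [simp]: "length (chain_dims A cs) = length cs"
  by (simp add: chain_dims_def)

lemma nth_chain_dims [simp]: "j < length cs \<Longrightarrow> chain_dims A cs ! j = ydim A (cs ! j)"
  by (simp add: chain_dims_def)

lemma chain_dims_eq_Nil_iff [simp]: "chain_dims A cs = [] \<longleftrightarrow> cs = []"
  by (simp add: chain_dims_def)

lemma fst_chmap:
  assumes fin: "finite A" and cs: "cs \<in> cube_chains A" and j: "j < length cs" and a: "a \<in> A"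
  shows "fst (chmap A cs (j, x)) a =
    (if hidx cs a = j then x ! yrank (snd (cs ! j)) a else if hidx cs a < j then C1 else C0)"
proof -
  have "cs \<noteq> []" using j by auto
  then have "chmap A cs (j, x) = yapply A (level_coords A (hidx cs) j, snd (cs ! j)) x"
    by (subst cube_chain_nth[OF fin cs j, symmetric]) simp
  then have "fst (chmap A cs (j, x)) a =
      (if a \<in> {b \<in> A. hidx cs b = j} then x ! yrank (snd (cs ! j)) a else level_coords A (hidx cs) j a)"
    by simp
  then show ?thesis using a by (simp add: level_coords_def)
qed

text \<open>\<open>wcanon\<close> replaces the final vertex of a cube by the initial vertex of the next one, which
  the chain maps to the same vertex of \<open>Y\<^sup>A\<close>.\<close>

lemma chmap_wcanon:
  assumes fin: "finite A" and cs: "cs \<in> cube_chains A"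
    and j: "j < length cs" and len: "length x = ydim A (cs ! j)"
  shows "wcanon (chain_dims A cs) (j, x) \<in> wcells (chain_dims A cs)"
    "chmap A cs (wcanon (chain_dims A cs) (j, x)) = chmap A cs (j, x)"
proof -
  have ne: "cs \<noteq> []" using j by auto
  consider "Suc j < length cs" "x = replicate (ydim A (cs ! j)) C1"
    | "\<not> (Suc j < length cs \<and> x = replicate (ydim A (cs ! j)) C1)"
    by blast
  then have "wcanon (chain_dims A cs) (j, x) \<in> wcells (chain_dims A cs) \<and>
      chmap A cs (wcanon (chain_dims A cs) (j, x)) = chmap A cs (j, x)"
  proof cases
    case 1
    obtain c r where cr: "cs ! j = (c, r)" by force
    obtain c' r' where cr': "cs ! Suc j = (c', r')" by force
    have cells: "(c, r) \<in> ycells A" "(c', r') \<in> ycells A"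
      using nth_cube_chain_in_ycells[OF cs] j 1(1) cr cr' by metis+
    have "0 < ydim A (cs ! Suc j)" using cube_chainsD(2)[OF cs] 1(1) by simp
    then have "(Suc j, replicate (ydim A (cs ! Suc j)) C0) \<in> wcells (chain_dims A cs)"
      using 1(1) ne by (simp add: wcells_iff)
    moreover have "yapply A (c', r') (replicate (ydim A (c', r')) C0) =
        yapply A (c, r) (replicate (ydim A (c, r)) C1)"
      using yapply_replicate_C0[OF fin cells(2)] yapply_replicate_C1[OF fin cells(1)]
        cube_chainsD(6)[OF cs 1(1)] cr cr' by simp
    ultimately show ?thesis using 1 ne cr cr' by simp
  next
    case 2
    then show ?thesis using j len ne by (auto simp: wcells_iff)
  qed
  then show "wcanon (chain_dims A cs) (j, x) \<in> wcells (chain_dims A cs)"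
    "chmap A cs (wcanon (chain_dims A cs) (j, x)) = chmap A cs (j, x)" by simp_all
qed

lemma wcells_chain_dimsD:
  "(j, x) \<in> wcells (chain_dims A cs) \<Longrightarrow> cs \<noteq> [] \<Longrightarrow> j < length cs \<and> length x = ydim A (cs ! j)"
  by (simp add: wcells_iff)

lemma chmap_wface:
  assumes fin: "finite A" and cs: "cs \<in> cube_chains A" and ne: "cs \<noteq> []"
    and y: "(j, x) \<in> wcells (chain_dims A cs)" and i: "1 \<le> i" "i \<le> wdim (j, x)"
  shows "wface (chain_dims A cs) (j, x) i e \<in> wcells (chain_dims A cs)"
    "chmap A cs (wface (chain_dims A cs) (j, x) i e) = yface A (chmap A cs (j, x)) i e"
proof -
  obtain c r where cr: "cs ! j = (c, r)" by force
  have j: "j < length cs" and len: "length x = ydim A (cs ! j)"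
    using wcells_chain_dimsD[OF y ne] by simp_all
  have cell: "(c, r) \<in> ycells A" using nth_cube_chain_in_ycells[OF cs j] cr by simp
  have "wface (chain_dims A cs) (j, x) i e = wcanon (chain_dims A cs) (j, repl_star x i (eps e))"
    by simp
  moreover have "yface A (yapply A (c, r) x) i e = yapply A (c, r) (repl_star x i (eps e))"
    using yface_yapply[OF fin cell _ i(1)] len i(2) cr by simp
  ultimately show "wface (chain_dims A cs) (j, x) i e \<in> wcells (chain_dims A cs)"
    "chmap A cs (wface (chain_dims A cs) (j, x) i e) = yface A (chmap A cs (j, x)) i e"
    using chmap_wcanon[OF fin cs j, of "repl_star x i (eps e)"] len ne cr by simp_all
qed

lemma ydim_chmap:
  assumes fin: "finite A" and cs: "cs \<in> cube_chains A" and ne: "cs \<noteq> []"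
    and y: "(j, x) \<in> wcells (chain_dims A cs)"
  shows "ydim A (chmap A cs (j, x)) = wdim (j, x)"
proof -
  obtain c r where cr: "cs ! j = (c, r)" by force
  have j: "j < length cs" and len: "length x = ydim A (cs ! j)"
    using wcells_chain_dimsD[OF y ne] by simp_all
  have "(c, r) \<in> ycells A" using nth_cube_chain_in_ycells[OF cs j] cr by simp
  then show ?thesis using ydim_yapply[OF fin] len ne cr by simp
qed

text \<open>Cells of different cubes of a chain can only have the same image if they are the glued vertex,
  which \<open>wcells\<close> represents only in the later cube.\<close>

lemma chmap_eq_imp_not_less:
  assumes fin: "finite A" and cs: "cs \<in> cube_chains A"
    and y1: "(j1, x1) \<in> wcells (chain_dims A cs)" and y2: "(j2, x2) \<in> wcells (chain_dims A cs)"
    and eq: "chmap A cs (j1, x1) = chmap A cs (j2, x2)"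
  shows "\<not> j1 < j2"
proof
  assume less: "j1 < j2"
  have ne: "cs \<noteq> []" using y1 y2 less by (auto simp: wcells_def)
  have j2: "j2 < length cs" and len1: "length x1 = ydim A (cs ! j1)"
    and not_final1: "\<not> (Suc j1 < length cs \<and> x1 = replicate (ydim A (cs ! j1)) C1)"
    using y1 y2 ne less by (auto simp: wcells_iff)
  have j1: "j1 < length cs" using less j2 by simp
  have coord: "fst (chmap A cs (j1, x1)) a = fst (chmap A cs (j2, x2)) a" for a
    using eq by simp
  show False
  proof (cases "Suc j1 < j2")
    case True
    then obtain b where "b \<in> A" "hidx cs b = Suc j1"
      using cube_chain_level_nonempty[OF fin cs, of "Suc j1"] j2 by auto
    then show False
      using coord[of b] fst_chmap[OF fin cs j1, of b] fst_chmap[OF fin cs j2, of b] True by simp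
  next
    case False
    then have j2_eq: "j2 = Suc j1" using less by simp
    have st: "strict_total_on {a \<in> A. hidx cs a = j1} (snd (cs ! j1))"
      by (rule strict_total_on_cube_chain_nth[OF fin cs j1])
    have "x1 = replicate (ydim A (cs ! j1)) C1"
    proof (rule nth_equalityI)
      fix k
      assume k: "k < length x1"
      then have "k < card {a \<in> A. hidx cs a = j1}"
        using len1 ydim_cube_chain_nth[OF fin cs j1] by simp
      moreover have "finite {a \<in> A. hidx cs a = j1}" using fin by simp
      ultimately obtain a where a: "a \<in> {a \<in> A. hidx cs a = j1}" "yrank (snd (cs ! j1)) a = k"
        using yrank_surj[OF st] by blast
      then show "x1 ! k = replicate (ydim A (cs ! j1)) C1 ! k"
        using coord[of a] fst_chmap[OF fin cs j1, of a] fst_chmap[OF fin cs j2, of a] j2_eq k len1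
        by auto
    qed (simp add: len1)
    then show False using not_final1 j2 j2_eq by simp
  qed
qed

lemma inj_on_chmap:
  assumes fin: "finite A" and cs: "cs \<in> cube_chains A"
  shows "inj_on (chmap A cs) (wcells (chain_dims A cs))"
proof (rule inj_onI)
  fix y1 y2
  assume y1: "y1 \<in> wcells (chain_dims A cs)" and y2: "y2 \<in> wcells (chain_dims A cs)"
    and eq: "chmap A cs y1 = chmap A cs y2"
  obtain j1 x1 j2 x2 where y: "y1 = (j1, x1)" "y2 = (j2, x2)" by force
  have "\<not> j1 < j2" using chmap_eq_imp_not_less[OF fin cs] y1 y2 eq unfolding y by blast
  moreover have "\<not> j2 < j1" using chmap_eq_imp_not_less[OF fin cs] y1 y2 eq[symmetric] unfolding y by blast
  ultimately have j: "j1 = j2" by simp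
  show "y1 = y2"
  proof (cases "cs = []")
    case True
    then show ?thesis using y1 y2 by (simp add: wcells_def)
  next
    case False
    obtain c r where cr: "cs ! j1 = (c, r)" by force
    have j1: "j1 < length cs" and len: "length x1 = card (ystars A c)" "length x2 = card (ystars A c)"
      using y1 y2 False cr unfolding y j by (auto simp: wcells_iff)
    have "(c, r) \<in> ycells A" using nth_cube_chain_in_ycells[OF cs j1] cr by simp
    moreover have "yapply A (c, r) x1 = yapply A (c, r) x2"
      using eq False cr unfolding y j by simp
    ultimately have "x1 = x2" using yapply_inject[OF fin _ len] by blast
    then show ?thesis using y j by simp
  qed
qed

lemma chmap_image_iff:
  assumes fin: "finite A" and cs: "cs \<in> cube_chains A" and ne: "cs \<noteq> []"
  shows "y \<in> chmap A cs ` wcells (chain_dims A cs) \<longleftrightarrow> (\<exists>j<length cs. face_of_cube A y (cs ! j))"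
proof
  assume "y \<in> chmap A cs ` wcells (chain_dims A cs)"
  then obtain j x where jx: "(j, x) \<in> wcells (chain_dims A cs)" and "y = chmap A cs (j, x)"
    by auto
  then have y: "y = yapply A (cs ! j) x" using ne by simp
  obtain c r where cr: "cs ! j = (c, r)" by force
  have j: "j < length cs" using wcells_chain_dimsD[OF jx ne] by simp
  have "(c, r) \<in> ycells A" using nth_cube_chain_in_ycells[OF cs j] cr by simp
  then have "face_of_cube A y (cs ! j)" using face_of_cube_yapply y cr by simp
  then show "\<exists>j<length cs. face_of_cube A y (cs ! j)" using j by blast
next
  assume "\<exists>j<length cs. face_of_cube A y (cs ! j)"
  then obtain j where j: "j < length cs" and face: "face_of_cube A y (cs ! j)" by blast
  obtain c r where cr: "cs ! j = (c, r)" by force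
  have cell: "(c, r) \<in> ycells A" using nth_cube_chain_in_ycells[OF cs j] cr by simp
  obtain x where len0: "length x = card (ystars A c)" and x: "yapply A (c, r) x = y"
    using face_of_cube_obtain_yapply[OF fin cell] face cr by metis
  have len: "length x = ydim A (cs ! j)" using len0 cr by simp
  have "chmap A cs (wcanon (chain_dims A cs) (j, x)) = y"
    using chmap_wcanon(2)[OF fin cs j len] ne cr x by simp
  then show "y \<in> chmap A cs ` wcells (chain_dims A cs)"
    using chmap_wcanon(1)[OF fin cs j len] by blast
qed

lemma chain_le_imp_image_subset:
  assumes "chain_le A cs es"
  shows "chmap A cs ` wcells (chain_dims A cs) \<subseteq> chmap A es ` wcells (chain_dims A es)"
proof -
  obtain f where "\<forall>y\<in>wcells (chain_dims A cs). f y \<in> wcells (chain_dims A es)"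
    and "\<forall>y\<in>wcells (chain_dims A cs). chmap A es (f y) = chmap A cs y"
    using assms unfolding chain_le_def precub_map_def by blast
  then show ?thesis by (metis image_eqI image_subsetI)
qed

text \<open>Since the wedge map of \<open>es\<close> is injective, the cells of \<open>cs\<close> have unique preimages, and this
  assignment commutes with faces because both wedge maps do.\<close>

lemma image_subset_imp_chain_le:
  assumes fin: "finite A" and cs: "cs \<in> cube_chains A" and es: "es \<in> cube_chains A" and A: "A \<noteq> {}"
    and sub: "chmap A cs ` wcells (chain_dims A cs) \<subseteq> chmap A es ` wcells (chain_dims A es)"
  shows "chain_le A cs es"
proof -
  define Wc where "Wc = wcells (chain_dims A cs)"
  define We where "We = wcells (chain_dims A es)"
  have img: "chmap A cs y \<in> chmap A es ` We" if "y \<in> Wc" for y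
    using that sub unfolding Wc_def We_def by blast
  have cs_ne: "cs \<noteq> []" and es_ne: "es \<noteq> []"
    using cube_chain_eq_Nil_iff[OF cs] cube_chain_eq_Nil_iff[OF es] A by auto
  have inj: "inj_on (chmap A es) We" unfolding We_def by (rule inj_on_chmap[OF fin es])
  define f where "f y = inv_into We (chmap A es) (chmap A cs y)" for y
  have f_in: "f y \<in> We" and chmap_f: "chmap A es (f y) = chmap A cs y" if "y \<in> Wc" for y
    unfolding f_def by (rule inv_into_into[OF img[OF that]], rule f_inv_into_f[OF img[OF that]])
  have wdim_f: "wdim (f y) = wdim y" if y: "y \<in> Wc" for y
    using ydim_chmap[OF fin es es_ne, of "fst (f y)" "snd (f y)"]
      ydim_chmap[OF fin cs cs_ne, of "fst y" "snd y"] f_in[OF y] chmap_f[OF y] y unfolding Wc_def We_def by simp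
  have "precub_map wdim (wface (chain_dims A cs)) Wc wdim (wface (chain_dims A es)) We f"
    unfolding precub_map_def
  proof (intro ballI conjI allI impI)
    fix y i e
    assume y: "y \<in> Wc" and i: "1 \<le> i \<and> i \<le> wdim y"
    obtain j x where jx: "y = (j, x)" by force
    obtain j' x' where jx': "f y = (j', x')" by force
    have face_c: "wface (chain_dims A cs) y i e \<in> Wc"
      "chmap A cs (wface (chain_dims A cs) y i e) = yface A (chmap A cs y) i e"
      using chmap_wface[OF fin cs cs_ne, of j x i e] y i unfolding jx Wc_def by auto
    have face_e: "wface (chain_dims A es) (f y) i e \<in> We"
      "chmap A es (wface (chain_dims A es) (f y) i e) = yface A (chmap A es (f y)) i e"
      using chmap_wface[OF fin es es_ne, of j' x' i e] f_in[OF y] i wdim_f[OF y] unfolding jx' We_def by auto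
    show "f (wface (chain_dims A cs) y i e) = wface (chain_dims A es) (f y) i e"
      using inj_onD[OF inj _ f_in[OF face_c(1)] face_e(1)] chmap_f[OF face_c(1)] chmap_f[OF y]
        face_c(2) face_e(2)
      by simp
  qed (simp_all add: f_in wdim_f)
  then show ?thesis
    using chmap_f unfolding chain_le_def Wc_def We_def by (intro exI[of _ f]) blast
qed

lemma chain_le_Nil: "chain_le A [] []"
  unfolding chain_le_def precub_map_def by (rule exI[of _ id]) simp

lemma chain_le_iff_faces:
  assumes fin: "finite A" and cs: "cs \<in> cube_chains A" and es: "es \<in> cube_chains A"
  shows "chain_le A cs es \<longleftrightarrow> (\<forall>k<length cs. \<exists>j<length es. face_of_cube A (cs ! k) (es ! j))"
proof (cases "A = {}")
  case True
  then show ?thesis using cube_chain_eq_Nil_iff[OF cs] cube_chain_eq_Nil_iff[OF es] chain_le_Nil by simp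
next
  case False
  have cs_ne: "cs \<noteq> []" and es_ne: "es \<noteq> []"
    using cube_chain_eq_Nil_iff[OF cs] cube_chain_eq_Nil_iff[OF es] False by auto
  note img_c = chmap_image_iff[OF fin cs cs_ne] and img_e = chmap_image_iff[OF fin es es_ne]
  show ?thesis
  proof
    assume "chain_le A cs es"
    then have sub: "chmap A cs ` wcells (chain_dims A cs) \<subseteq> chmap A es ` wcells (chain_dims A es)"
      by (rule chain_le_imp_image_subset)
    show "\<forall>k<length cs. \<exists>j<length es. face_of_cube A (cs ! k) (es ! j)"
    proof (intro allI impI)
      fix k
      assume k: "k < length cs"
      then have "cs ! k \<in> chmap A cs ` wcells (chain_dims A cs)"
        using img_c[of "cs ! k"] face_of_cube_refl[OF nth_cube_chain_in_ycells[OF cs k]] by blast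
      then show "\<exists>j<length es. face_of_cube A (cs ! k) (es ! j)" using sub img_e[of "cs ! k"] by blast
    qed
  next
    assume faces: "\<forall>k<length cs. \<exists>j<length es. face_of_cube A (cs ! k) (es ! j)"
    have "y \<in> chmap A es ` wcells (chain_dims A es)"
      if y: "y \<in> chmap A cs ` wcells (chain_dims A cs)" for y
    proof -
      obtain k where k: "k < length cs" "face_of_cube A y (cs ! k)" using img_c[of y] y by blast
      then obtain j where "j < length es" "face_of_cube A (cs ! k) (es ! j)" using faces by blast
      then show ?thesis using img_e[of y] face_of_cube_trans[OF k(2)] by blast
    qed
    then have "chmap A cs ` wcells (chain_dims A cs) \<subseteq> chmap A es ` wcells (chain_dims A es)"
      by blast
    then show "chain_le A cs es" by (rule image_subset_imp_chain_le[OF fin cs es False])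
  qed
qed

section \<open>Semilinear orders and the cube chain of a regular double order\<close>

lemma induced_by_unique:
  assumes ind: "induced_by A h l X" and ind': "induced_by A h' l' X"
  shows "a \<in> A \<Longrightarrow> h' a = h a"
proof (induction "h a" arbitrary: a rule: less_induct)
  case less
  have range: "h ` A = {1..l}" "h' ` A = {1..l'}"
    and X: "X = {(a, b). a \<in> A \<and> b \<in> A \<and> h a < h b}" "X = {(a, b). a \<in> A \<and> b \<in> A \<and> h' a < h' b}"
    using ind ind' unfolding induced_by_def by auto
  have "h a \<le> h' a"
  proof (cases "h a = 1")
    case False
    have "h a \<in> {1..l}" using range(1) less.prems by blast
    then have "h a - 1 \<in> h ` A" using range(1) False by auto
    then obtain b where b: "b \<in> A" "h b = h a - 1" by auto
    then have "(b, a) \<in> X" using X(1) less.prems False \<open>h a \<in> {1..l}\<close> by auto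
    then have "h' b < h' a" using X(2) by auto
    moreover have "h' b = h b" using less.hyps[of b] b \<open>h a \<in> {1..l}\<close> by simp
    ultimately show ?thesis using b(2) by simp
  qed (use range(2) less.prems in force)
  moreover have "h' a \<le> h a"
  proof (cases "h' a = 1")
    case False
    have "h' a \<in> {1..l'}" using range(2) less.prems by blast
    then have "h' a - 1 \<in> h' ` A" using range(2) False by auto
    then obtain b where b: "b \<in> A" "h' b = h' a - 1" by auto
    then have "(b, a) \<in> X" using X(2) less.prems False \<open>h' a \<in> {1..l'}\<close> by auto
    then have "h b < h a" using X(1) by auto
    moreover have "h' b = h b" using less.hyps[of b] b(1) \<open>h b < h a\<close> by simp
    ultimately show ?thesis using b(2) by simp
  qed (use range(1) less.prems in force)
  ultimately show ?case by simp
qed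

lemma hfun_eqI:
  assumes "h \<in> extensional A" "induced_by A h l X"
  shows "hfun A X = h"
  unfolding hfun_def
proof (rule the_equality)
  fix g
  assume g: "g \<in> extensional A \<and> (\<exists>l. induced_by A g l X)"
  then obtain l' where "induced_by A g l' X" by blast
  then have "a \<in> A \<Longrightarrow> g a = h a" for a using induced_by_unique[OF assms(2)] by blast
  then show "g = h" using g assms(1) by (intro extensionalityI[of _ A]) auto
qed (use assms in blast)

lemma semilinear_obtain_induced_by:
  assumes "semilinear A X"
  obtains h l where "h \<in> extensional A" "induced_by A h l X"
proof -
  obtain h l where "induced_by A h l X" using assms unfolding semilinear_def by blast
  then have "induced_by A (restrict h A) l X" unfolding induced_by_def by auto
  then show ?thesis using that by blast
qed

lemma chain_of_eq:
  assumes "h \<in> extensional A" "induced_by A h l X"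
  shows "chain_of A (X, Y) = map (\<lambda>j. (level_coords A h j, Restr Y {a \<in> A. h a = j})) [1..<Suc l]"
  using hfun_eqI[OF assms] assms(2) by (simp add: induced_by_def level_coords_def Let_def del: upt_Suc)

lemma induced_by_hidx:
  assumes fin: "finite A" and cs: "cs \<in> cube_chains A"
  shows "induced_by A (restrict (\<lambda>a. Suc (hidx cs a)) A) (length cs) (fst (dorder A cs))"
proof -
  have "restrict (\<lambda>a. Suc (hidx cs a)) A ` A = {1..length cs}"
  proof
    show "restrict (\<lambda>a. Suc (hidx cs a)) A ` A \<subseteq> {1..length cs}"
      using cube_chain_coord(1)[OF fin cs] by (auto simp: Suc_le_eq)
  next
    show "{1..length cs} \<subseteq> restrict (\<lambda>a. Suc (hidx cs a)) A ` A"
    proof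
      fix k
      assume k: "k \<in> {1..length cs}"
      then have "k - 1 < length cs" by auto
      then obtain a where "a \<in> A" "hidx cs a = k - 1"
        using cube_chain_level_nonempty[OF fin cs] by blast
      then show "k \<in> restrict (\<lambda>a. Suc (hidx cs a)) A ` A" using k by (auto intro!: image_eqI[of _ _ a])
    qed
  qed
  then show ?thesis by (auto simp: induced_by_def dorder_def)
qed

lemma regular_dorder:
  assumes fin: "finite A" and cs: "cs \<in> cube_chains A"
  shows "regular A (dorder A cs)"
proof -
  define X where "X = fst (dorder A cs)"
  define Y where "Y = snd (dorder A cs)"
  have d: "dorder A cs = (X, Y)" by (simp add: X_def Y_def)
  have X_iff: "(a, b) \<in> X \<longleftrightarrow> a \<in> A \<and> b \<in> A \<and> hidx cs a < hidx cs b" for a b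
    by (simp add: X_def dorder_def)
  have Y_iff: "(a, b) \<in> Y \<longleftrightarrow> a \<in> A \<and> b \<in> A \<and> hidx cs a = hidx cs b \<and> (a, b) \<in> snd (cs ! hidx cs a)"
    for a b by (simp add: Y_def dorder_def)
  have st: "strict_total_on {b \<in> A. hidx cs b = hidx cs a} (snd (cs ! hidx cs a))" if "a \<in> A" for a
    using strict_total_on_cube_chain_nth[OF fin cs cube_chain_coord(1)[OF fin cs that]] .
  have "spo_on A X" by (auto simp: spo_on_def X_iff intro!: irreflI transI)
  moreover have "spo_on A Y"
  proof -
    have "irrefl Y" using strict_total_onD(2)[OF st] by (auto simp: Y_iff intro!: irreflI)
    moreover have "trans Y"
    proof (rule transI)
      fix a b c
      assume "(a, b) \<in> Y" "(b, c) \<in> Y"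
      then show "(a, c) \<in> Y" using strict_total_onD(3)[OF st[of a]] by (auto simp: Y_iff)
    qed
    ultimately show ?thesis by (auto simp: spo_on_def Y_iff)
  qed
  moreover have "(a, b) \<in> X \<or> (b, a) \<in> X \<or> (a, b) \<in> Y \<or> (b, a) \<in> Y"
    if ab: "a \<in> A" "b \<in> A" "a \<noteq> b" for a b
  proof (cases "hidx cs a = hidx cs b")
    case True
    then show ?thesis using strict_total_onD(4)[OF st[OF ab(1)], of a b] ab by (auto simp: Y_iff)
  qed (use ab in \<open>auto simp: X_iff\<close>)
  moreover have "semilinear A X"
    unfolding semilinear_def X_def using induced_by_hidx[OF fin cs] by blast
  moreover have "(a, b) \<in> X \<Longrightarrow> (a, b) \<notin> Y \<and> (b, a) \<notin> Y" for a b
    by (auto simp: X_iff Y_iff)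
  ultimately show ?thesis unfolding d by simp
qed

lemma chain_of_dorder:
  assumes fin: "finite A" and cs: "cs \<in> cube_chains A"
  shows "chain_of A (dorder A cs) = cs"
proof -
  define h where "h = restrict (\<lambda>a. Suc (hidx cs a)) A"
  define F where "F j = (level_coords A h j, Restr (snd (dorder A cs)) {a \<in> A. h a = j})" for j
  have "chain_of A (dorder A cs) = map F [1..<Suc (length cs)]"
    using chain_of_eq[of h A "length cs" "fst (dorder A cs)" "snd (dorder A cs)"] induced_by_hidx[OF fin cs]
    unfolding h_def F_def by simp
  also have "\<dots> = cs"
  proof (rule nth_equalityI)
    fix i
    assume "i < length (map F [1..<Suc (length cs)])"
    then have i: "i < length cs" by (simp del: upt_Suc)
    have "level_coords A h (Suc i) = level_coords A (hidx cs) i"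
      unfolding level_coords_def h_def by (auto simp: fun_eq_iff)
    moreover have "Restr (snd (dorder A cs)) {a \<in> A. h a = Suc i} = snd (cs ! i)"
      using strict_total_onD(1)[OF strict_total_on_cube_chain_nth[OF fin cs i]]
      unfolding h_def dorder_def by auto
    ultimately have "map F [1..<Suc (length cs)] ! i = (level_coords A (hidx cs) i, snd (cs ! i))"
      using i by (simp add: F_def del: upt_Suc)
    also have "\<dots> = cs ! i" using cube_chain_nth[OF fin cs i] by (rule sym)
    finally show "map F [1..<Suc (length cs)] ! i = cs ! i" .
  qed (simp del: upt_Suc)
  finally show ?thesis .
qed

lemma yd0_level_cube:
  "finite A \<Longrightarrow> (level_coords A h j, r) \<in> ycells A \<Longrightarrow>
    yd0 A (level_coords A h j, r) = (restrict (\<lambda>a. if h a < j then C1 else C0) A, {})"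
  by (simp add: yd0_eq) (auto simp: fun_eq_iff level_coords_def)

lemma yd1_level_cube:
  "finite A \<Longrightarrow> (level_coords A h j, r) \<in> ycells A \<Longrightarrow>
    yd1 A (level_coords A h j, r) = (restrict (\<lambda>a. if h a < Suc j then C1 else C0) A, {})"
  by (simp add: yd1_eq) (auto simp: fun_eq_iff level_coords_def)

lemma regular_induced_byD:
  assumes reg: "regular A (X, Y)" and ind: "induced_by A h l X"
  shows "(a, b) \<in> Y \<Longrightarrow> a \<in> A \<and> b \<in> A \<and> h a = h b"
    and "strict_total_on {a \<in> A. h a = j} (Restr Y {a \<in> A. h a = j})"
proof -
  have X: "X = {(a, b). a \<in> A \<and> b \<in> A \<and> h a < h b}" using ind by (simp add: induced_by_def)
  have Y: "spo_on A Y" and tot: "\<forall>a\<in>A. \<forall>b\<in>A. a \<noteq> b \<longrightarrow> (a, b) \<in> X \<or> (b, a) \<in> X \<or> (a, b) \<in> Y \<or> (b, a) \<in> Y"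
    and disj: "\<forall>a b. (a, b) \<in> X \<longrightarrow> (a, b) \<notin> Y \<and> (b, a) \<notin> Y"
    using reg by auto
  show "a \<in> A \<and> b \<in> A \<and> h a = h b" if ab: "(a, b) \<in> Y" for a b
  proof -
    have "a \<in> A" "b \<in> A" using ab Y unfolding spo_on_def by auto
    moreover have "\<not> h a < h b" "\<not> h b < h a" using ab disj calculation unfolding X by auto
    ultimately show ?thesis by simp
  qed
  have "total_on {a \<in> A. h a = j} (Restr Y {a \<in> A. h a = j})"
    unfolding total_on_def
  proof (intro ballI impI)
    fix a b
    assume ab: "a \<in> {a \<in> A. h a = j}" "b \<in> {a \<in> A. h a = j}" "a \<noteq> b"
    then show "(a, b) \<in> Restr Y {a \<in> A. h a = j} \<or> (b, a) \<in> Restr Y {a \<in> A. h a = j}"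
      using tot[rule_format, of a b] unfolding X by auto
  qed
  then show "strict_total_on {a \<in> A. h a = j} (Restr Y {a \<in> A. h a = j})"
    using Y unfolding strict_total_on_def spo_on_def by (auto simp: irrefl_on_def trans_def)
qed

lemma level_cubes_in_cube_chains:
  assumes fin: "finite A" and range: "h ` A = {1..l}"
    and st: "\<And>j. strict_total_on {a \<in> A. h a = j} (r j)"
  shows "map (\<lambda>j. (level_coords A h j, r j)) [1..<Suc l] \<in> cube_chains A"
proof -
  define F where "F j = (level_coords A h j, r j)" for j
  have cell: "F j \<in> ycells A" for j
    using st by (simp add: F_def)
  have yd0F: "yd0 A (F j) = (restrict (\<lambda>a. if h a < j then C1 else C0) A, {})" for j
    unfolding F_def by (rule yd0_level_cube[OF fin cell[of j, unfolded F_def]])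
  have yd1F: "yd1 A (F j) = (restrict (\<lambda>a. if h a < Suc j then C1 else C0) A, {})" for j
    unfolding F_def by (rule yd1_level_cube[OF fin cell[of j, unfolded F_def]])
  have pos: "0 < ydim A (F j)" if "j \<in> {1..l}" for j
  proof -
    have "j \<in> h ` A" using that range by simp
    then obtain a where "a \<in> A" "h a = j" by blast
    then show ?thesis using fin by (auto simp: F_def card_gt_0_iff)
  qed
  have ends: "if map F [1..<Suc l] = [] then yinit A = yfinal A
      else yd0 A (hd (map F [1..<Suc l])) = yinit A \<and> yd1 A (last (map F [1..<Suc l])) = yfinal A"
  proof (cases "l = 0")
    case True
    then have "A = {}" using range by auto
    then show ?thesis using True by (simp add: yinit_def yfinal_def restrict_def)
  next
    case False
    have "1 \<le> h a" "h a \<le> l" if "a \<in> A" for a using range that by auto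
    then have "yd0 A (F 1) = yinit A" "yd1 A (F l) = yfinal A"
      unfolding yd0F yd1F yinit_def yfinal_def
      by (auto intro!: restrict_ext simp: Suc_le_eq less_Suc_eq_le)
    then show ?thesis using False by (simp add: hd_map last_map hd_upt last_upt del: upt_Suc)
  qed
  have "set (map F [1..<Suc l]) \<subseteq> ycells A" using cell by auto
  moreover have "\<forall>y\<in>set (map F [1..<Suc l]). 0 < ydim A y" using pos by (auto simp del: upt_Suc)
  moreover have "\<forall>j. Suc j < length (map F [1..<Suc l]) \<longrightarrow>
      yd1 A (map F [1..<Suc l] ! j) = yd0 A (map F [1..<Suc l] ! Suc j)"
    by (simp add: yd0F yd1F del: upt_Suc)
  ultimately show ?thesis unfolding F_def[symmetric] cube_chains_def using ends by blast
qed

lemma chain_of_in_cube_chains: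
  assumes fin: "finite A" and reg: "regular A d"
  shows "chain_of A d \<in> cube_chains A"
proof -
  obtain X Y where d: "d = (X, Y)" by force
  have "semilinear A X" using reg d by simp
  then obtain h l where h: "h \<in> extensional A" and ind: "induced_by A h l X"
    by (rule semilinear_obtain_induced_by)
  have "map (\<lambda>j. (level_coords A h j, Restr Y {a \<in> A. h a = j})) [1..<Suc l] \<in> cube_chains A"
    using level_cubes_in_cube_chains[OF fin] regular_induced_byD(2)[of A X Y h l] reg d ind
    by (simp add: induced_by_def)
  then show ?thesis unfolding d chain_of_eq[OF h ind] .
qed

lemma hidx_chain_of:
  assumes h: "h \<in> extensional A" and ind: "induced_by A h l X" and a: "a \<in> A"
  shows "hidx (chain_of A (X, Y)) a = h a - 1"
proof -
  have ha: "1 \<le> h a" "h a \<le> l" using ind a by (auto simp: induced_by_def)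
  have len: "length (chain_of A (X, Y)) = l"
    unfolding chain_of_eq[OF h ind] by (simp del: upt_Suc)
  have nth: "chain_of A (X, Y) ! j = (level_coords A h (Suc j), Restr Y {a \<in> A. h a = Suc j})"
    if "j < l" for j
    using that unfolding chain_of_eq[OF h ind] by (simp del: upt_Suc)
  show ?thesis
    unfolding hidx_def
  proof (rule the_equality)
    show "h a - 1 < length (chain_of A (X, Y)) \<and> fst (chain_of A (X, Y) ! (h a - 1)) a = CS"
      using ha nth[of "h a - 1"] len a by (simp add: level_coords_def)
  next
    fix j
    assume "j < length (chain_of A (X, Y)) \<and> fst (chain_of A (X, Y) ! j) a = CS"
    then show "j = h a - 1"
      using nth[of j] len ha a by (auto simp: level_coords_def split: if_splits)
  qed
qed

lemma dorder_chain_of: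
  assumes reg: "regular A d"
  shows "dorder A (chain_of A d) = d"
proof -
  obtain X Y where d: "d = (X, Y)" by force
  have reg: "regular A (X, Y)" using reg d by simp
  have "semilinear A X" using reg by simp
  then obtain h l where h: "h \<in> extensional A" and ind: "induced_by A h l X"
    by (rule semilinear_obtain_induced_by)
  have range: "1 \<le> h a \<and> h a \<le> l" if "a \<in> A" for a using ind that by (auto simp: induced_by_def)
  note hidx = hidx_chain_of[OF h ind]
  have "snd (chain_of A (X, Y) ! hidx (chain_of A (X, Y)) a) = Restr Y {b \<in> A. h b = h a}"
    if a: "a \<in> A" for a
  proof -
    have "h a - 1 < l" "Suc (h a - 1) = h a" using range[OF a] by auto
    then show ?thesis using hidx[OF a] unfolding chain_of_eq[OF h ind] by (simp del: upt_Suc)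
  qed
  then have "{(a, b). a \<in> A \<and> b \<in> A \<and> hidx (chain_of A (X, Y)) a = hidx (chain_of A (X, Y)) b \<and>
      (a, b) \<in> snd (chain_of A (X, Y) ! hidx (chain_of A (X, Y)) a)} = Y"
    using hidx range regular_induced_byD(1)[OF reg ind] by fastforce
  moreover have "{(a, b). a \<in> A \<and> b \<in> A \<and> hidx (chain_of A (X, Y)) a < hidx (chain_of A (X, Y)) b} = X"
    using hidx range ind unfolding induced_by_def by fastforce
  ultimately show ?thesis unfolding dorder_def d by simp
qed

section \<open>Morphisms of cube chains and the order on double orders\<close>

lemma face_of_cube_chain_nth_iff:
  assumes fin: "finite A" and cs: "cs \<in> cube_chains A" and es: "es \<in> cube_chains A"
    and k: "k < length cs" and j: "j < length es"
  shows "face_of_cube A (cs ! k) (es ! j) \<longleftrightarrow>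
    (\<forall>a\<in>A. (hidx es a < j \<longrightarrow> hidx cs a < k) \<and> (j < hidx es a \<longrightarrow> k < hidx cs a)) \<and>
    snd (cs ! k) = Restr (snd (es ! j)) {a \<in> A. hidx cs a = k}"
proof -
  have "fst (cs ! k) = level_coords A (hidx cs) k" "fst (es ! j) = level_coords A (hidx es) j"
    using arg_cong[OF cube_chain_nth[OF fin cs k], of fst] arg_cong[OF cube_chain_nth[OF fin es j], of fst]
    by simp_all
  moreover have "(\<forall>a\<in>A. level_coords A (hidx es) j a \<noteq> CS \<longrightarrow>
        level_coords A (hidx cs) k a = level_coords A (hidx es) j a) \<longleftrightarrow>
      (\<forall>a\<in>A. (hidx es a < j \<longrightarrow> hidx cs a < k) \<and> (j < hidx es a \<longrightarrow> k < hidx cs a))"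
    by (auto simp: level_coords_def split: if_splits)
  ultimately show ?thesis by (simp add: face_of_cube_def)
qed

lemma dle_dorder_iff:
  "dle (dorder A es) (dorder A cs) \<longleftrightarrow>
    (\<forall>a\<in>A. \<forall>b\<in>A. hidx es a < hidx es b \<longrightarrow> hidx cs a < hidx cs b) \<and>
    (\<forall>a\<in>A. \<forall>b\<in>A. hidx cs a = hidx cs b \<and> (a, b) \<in> snd (cs ! hidx cs a) \<longrightarrow>
       hidx es a = hidx es b \<and> (a, b) \<in> snd (es ! hidx es a))"
  unfolding dorder_def by auto

lemma faces_imp_dle_dorder:
  assumes fin: "finite A" and cs: "cs \<in> cube_chains A" and es: "es \<in> cube_chains A"
    and faces: "\<forall>k<length cs. \<exists>j<length es. face_of_cube A (cs ! k) (es ! j)"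
  shows "dle (dorder A es) (dorder A cs)"
proof -
  let ?p = "hidx cs" and ?q = "hidx es"
  have level: "\<exists>j. (\<forall>a\<in>A. ?p a = ?p b \<longrightarrow> ?q a = j) \<and> (\<forall>a\<in>A. ?q a < j \<longrightarrow> ?p a < ?p b) \<and>
      snd (cs ! ?p b) = Restr (snd (es ! j)) {a \<in> A. ?p a = ?p b}" if b: "b \<in> A" for b
  proof -
    have k: "?p b < length cs" by (rule cube_chain_coord(1)[OF fin cs b])
    then obtain j where j: "j < length es" and "face_of_cube A (cs ! ?p b) (es ! j)" using faces by blast
    then have order: "\<forall>a\<in>A. (?q a < j \<longrightarrow> ?p a < ?p b) \<and> (j < ?q a \<longrightarrow> ?p b < ?p a)"
      and "snd (cs ! ?p b) = Restr (snd (es ! j)) {a \<in> A. ?p a = ?p b}"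
      using face_of_cube_chain_nth_iff[OF fin cs es k j] by simp_all
    moreover have "?q a = j" if "a \<in> A" "?p a = ?p b" for a
      using order that by (cases "?q a" j rule: linorder_cases) auto
    ultimately show ?thesis by blast
  qed
  have "?p a < ?p b" if ab: "a \<in> A" "b \<in> A" "?q a < ?q b" for a b
  proof -
    obtain j where "\<forall>a\<in>A. ?p a = ?p b \<longrightarrow> ?q a = j" "\<forall>a\<in>A. ?q a < j \<longrightarrow> ?p a < ?p b"
      using level[OF ab(2)] by blast
    then show ?thesis using ab by simp
  qed
  moreover have "?q a = ?q b \<and> (a, b) \<in> snd (es ! ?q a)"
    if "a \<in> A" "b \<in> A" "?p a = ?p b" "(a, b) \<in> snd (cs ! ?p a)" for a b
    using level[OF that(1)] that by auto
  ultimately show ?thesis unfolding dle_dorder_iff by blast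
qed

lemma dle_dorder_same_level:
  assumes fin: "finite A" and cs: "cs \<in> cube_chains A" and le: "dle (dorder A es) (dorder A cs)"
    and a: "a \<in> A" and b: "b \<in> A" and level: "hidx cs a = hidx cs b"
  shows "hidx es a = hidx es b"
proof (cases "a = b")
  case False
  have "strict_total_on {c \<in> A. hidx cs c = hidx cs a} (snd (cs ! hidx cs a))"
    by (rule strict_total_on_cube_chain_nth[OF fin cs cube_chain_coord(1)[OF fin cs a]])
  then have "(a, b) \<in> snd (cs ! hidx cs a) \<or> (b, a) \<in> snd (cs ! hidx cs b)"
    using strict_total_onD(4) a b level False by fastforce
  then show ?thesis using le a b level unfolding dle_dorder_iff by metis
qed simp

text \<open>Both orders are total on the level, so the inclusion of the \<open>y\<close>-orders already forces equality.\<close>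

lemma dle_dorder_level_order:
  assumes fin: "finite A" and cs: "cs \<in> cube_chains A" and es: "es \<in> cube_chains A"
    and le: "dle (dorder A es) (dorder A cs)" and b: "b \<in> A"
  shows "snd (cs ! hidx cs b) = Restr (snd (es ! hidx es b)) {a \<in> A. hidx cs a = hidx cs b}"
proof -
  let ?p = "hidx cs" and ?q = "hidx es"
  have Y: "(a1, a2) \<in> snd (es ! ?q b)"
    if "a1 \<in> A" "a2 \<in> A" "?p a1 = ?p b" "?p a2 = ?p b" "(a1, a2) \<in> snd (cs ! ?p b)" for a1 a2
    using le that dle_dorder_same_level[OF fin cs le that(1) b] unfolding dle_dorder_iff by metis
  have stc: "strict_total_on {a \<in> A. ?p a = ?p b} (snd (cs ! ?p b))"
    by (rule strict_total_on_cube_chain_nth[OF fin cs cube_chain_coord(1)[OF fin cs b]])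
  have ste: "strict_total_on {a \<in> A. ?q a = ?q b} (snd (es ! ?q b))"
    by (rule strict_total_on_cube_chain_nth[OF fin es cube_chain_coord(1)[OF fin es b]])
  show ?thesis
  proof (intro set_eqI iffI)
    fix z
    assume z: "z \<in> snd (cs ! ?p b)"
    then show "z \<in> Restr (snd (es ! ?q b)) {a \<in> A. ?p a = ?p b}"
      using Y strict_total_onD(1)[OF stc] by force
  next
    fix z
    assume z: "z \<in> Restr (snd (es ! ?q b)) {a \<in> A. ?p a = ?p b}"
    obtain a1 a2 where z_eq: "z = (a1, a2)" by force
    have a: "a1 \<in> A" "a2 \<in> A" "?p a1 = ?p b" "?p a2 = ?p b" and e12: "(a1, a2) \<in> snd (es ! ?q b)"
      using z z_eq by auto
    have "(a2, a1) \<notin> snd (cs ! ?p b)"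
      using Y[of a2 a1] a e12 strict_total_onD(2,3)[OF ste] by blast
    moreover have "a1 \<noteq> a2" using e12 strict_total_onD(2)[OF ste] by auto
    ultimately show "z \<in> snd (cs ! ?p b)" using strict_total_onD(4)[OF stc] a z_eq by auto
  qed
qed

lemma dle_dorder_imp_faces:
  assumes fin: "finite A" and cs: "cs \<in> cube_chains A" and es: "es \<in> cube_chains A"
    and le: "dle (dorder A es) (dorder A cs)" and k: "k < length cs"
  shows "\<exists>j<length es. face_of_cube A (cs ! k) (es ! j)"
proof -
  let ?p = "hidx cs" and ?q = "hidx es"
  have X: "?p a < ?p b" if "a \<in> A" "b \<in> A" "?q a < ?q b" for a b
    using le that unfolding dle_dorder_iff by blast
  obtain b where b: "b \<in> A" "?p b = k" using cube_chain_level_nonempty[OF fin cs k] by blast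
  have j: "?q b < length es" by (rule cube_chain_coord(1)[OF fin es b(1)])
  have "?p a < k" if "a \<in> A" "?q a < ?q b" for a
    using X[OF that(1) b(1)] that b by simp
  moreover have "k < ?p a" if "a \<in> A" "?q b < ?q a" for a
    using X[OF b(1) that(1)] that b by simp
  moreover have "snd (cs ! k) = Restr (snd (es ! ?q b)) {a \<in> A. ?p a = k}"
    using dle_dorder_level_order[OF fin cs es le b(1)] b(2) by simp
  ultimately show ?thesis using face_of_cube_chain_nth_iff[OF fin cs es k j] j by blast
qed

theorem chain_le_iff_dle_dorder:
  assumes fin: "finite A" and cs: "cs \<in> cube_chains A" and es: "es \<in> cube_chains A"
  shows "chain_le A cs es \<longleftrightarrow> dle (dorder A es) (dorder A cs)"
  using chain_le_iff_faces[OF fin cs es] faces_imp_dle_dorder[OF fin cs es]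
    dle_dorder_imp_faces[OF fin cs es] by blast

section \<open>Equivariance\<close>

lemma hidx_chain_act: "hidx (chain_act cs \<sigma>) a = hidx cs (\<sigma> a)"
proof -
  have "j < length (chain_act cs \<sigma>) \<and> fst (chain_act cs \<sigma> ! j) a = CS \<longleftrightarrow>
      j < length cs \<and> fst (cs ! j) (\<sigma> a) = CS" for j
    by (cases "cs ! j") (auto simp: chain_act_def)
  then show ?thesis unfolding hidx_def by simp
qed

lemma dorder_chain_act:
  assumes fin: "finite A" and \<sigma>: "\<sigma> permutes A" and cs: "cs \<in> cube_chains A"
  shows "dorder A (chain_act cs \<sigma>) = dorder_act (dorder A cs) \<sigma>"
proof -
  have in_A: "\<sigma> a \<in> A \<longleftrightarrow> a \<in> A" for a using permutes_in_image[OF \<sigma>] by blast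
  have "snd (chain_act cs \<sigma> ! hidx cs (\<sigma> a)) = rel_act (snd (cs ! hidx cs (\<sigma> a))) \<sigma>" if "a \<in> A" for a
    using cube_chain_coord(1)[OF fin cs, of "\<sigma> a"] in_A[of a] that
    by (cases "cs ! hidx cs (\<sigma> a)") (simp add: chain_act_def)
  then show ?thesis
    unfolding dorder_def dorder_act.simps hidx_chain_act using in_A by (auto simp: rel_act_def)
qed

lemma induced_by_permutes:
  assumes \<sigma>: "\<sigma> permutes A" and ind: "induced_by A h l X"
  shows "induced_by A (h \<circ> \<sigma>) l (rel_act X \<sigma>)"
proof -
  have "(h \<circ> \<sigma>) ` A = h ` A" unfolding image_comp[symmetric] permutes_image[OF \<sigma>] ..
  then show ?thesis
    using ind permutes_in_image[OF \<sigma>] unfolding induced_by_def rel_act_def by auto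
qed

lemma chain_of_dorder_act:
  assumes \<sigma>: "\<sigma> permutes A" and reg: "regular A d"
  shows "chain_of A (dorder_act d \<sigma>) = chain_act (chain_of A d) \<sigma>"
proof -
  obtain X Y where d: "d = (X, Y)" by force
  have "semilinear A X" using reg d by simp
  then obtain h l where h: "h \<in> extensional A" and ind: "induced_by A h l X"
    by (rule semilinear_obtain_induced_by)
  have "h \<circ> \<sigma> \<in> extensional A" using h permutes_not_in[OF \<sigma>] by (auto simp: extensional_def)
  then have "chain_of A (rel_act X \<sigma>, rel_act Y \<sigma>) =
      map (\<lambda>j. (level_coords A (h \<circ> \<sigma>) j, Restr (rel_act Y \<sigma>) {a \<in> A. (h \<circ> \<sigma>) a = j})) [1..<Suc l]"
    by (rule chain_of_eq[OF _ induced_by_permutes[OF \<sigma> ind]])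
  moreover have "(level_coords A (h \<circ> \<sigma>) j, Restr (rel_act Y \<sigma>) {a \<in> A. (h \<circ> \<sigma>) a = j}) =
      cube_act (level_coords A h j, Restr Y {a \<in> A. h a = j}) \<sigma>" for j
    using permutes_in_image[OF \<sigma>] permutes_not_in[OF \<sigma>]
    by (auto simp: fun_eq_iff rel_act_def level_coords_def)
  ultimately show ?thesis
    unfolding d dorder_act.simps chain_of_eq[OF h ind] chain_act_def by simp
qed

theorem proposition4p9:
  fixes A :: "'a set"
  assumes "finite A"
  shows "(\<forall>cs\<in>cube_chains A. dorder A cs \<in> regular_dorders A \<and> chain_of A (dorder A cs) = cs)
       \<and> (\<forall>d\<in>regular_dorders A. chain_of A d \<in> cube_chains A \<and> dorder A (chain_of A d) = d)
       \<and> (\<forall>cs\<in>cube_chains A. \<forall>es\<in>cube_chains A.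
            chain_le A cs es \<longleftrightarrow> dle (dorder A es) (dorder A cs))
       \<and> (\<forall>d1\<in>regular_dorders A. \<forall>d2\<in>regular_dorders A.
            dle d2 d1 \<longleftrightarrow> chain_le A (chain_of A d1) (chain_of A d2))
       \<and> (\<forall>\<sigma>. \<sigma> permutes A \<longrightarrow>
            (\<forall>cs\<in>cube_chains A. dorder A (chain_act cs \<sigma>) = dorder_act (dorder A cs) \<sigma>)
          \<and> (\<forall>d\<in>regular_dorders A. chain_of A (dorder_act d \<sigma>) = chain_act (chain_of A d) \<sigma>))"
proof -
  have "\<forall>cs\<in>cube_chains A. dorder A cs \<in> regular_dorders A \<and> chain_of A (dorder A cs) = cs"
    using regular_dorder[OF assms] chain_of_dorder[OF assms] unfolding regular_dorders_def by blast
  moreover have "\<forall>d\<in>regular_dorders A. chain_of A d \<in> cube_chains A \<and> dorder A (chain_of A d) = d"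
    using chain_of_in_cube_chains[OF assms] dorder_chain_of unfolding regular_dorders_def by blast
  moreover have "\<forall>d1\<in>regular_dorders A. \<forall>d2\<in>regular_dorders A.
      dle d2 d1 \<longleftrightarrow> chain_le A (chain_of A d1) (chain_of A d2)"
    using chain_le_iff_dle_dorder[OF assms] calculation(2) by simp
  moreover have "\<forall>\<sigma>. \<sigma> permutes A \<longrightarrow>
      (\<forall>cs\<in>cube_chains A. dorder A (chain_act cs \<sigma>) = dorder_act (dorder A cs) \<sigma>) \<and>
      (\<forall>d\<in>regular_dorders A. chain_of A (dorder_act d \<sigma>) = chain_act (chain_of A d) \<sigma>)"
    using dorder_chain_act[OF assms] chain_of_dorder_act unfolding regular_dorders_def by blast
  ultimately show ?thesis using chain_le_iff_dle_dorder[OF assms] by blast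
qed

end
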